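(* For every positive $\alpha=(\alpha_x)_{x\in V}$ and every $k\in\mathbb N$, $$\inf_{\xi\in\Xi_{k-1}}\mathrm{gap}_{\rm RW}(\alpha+\xi)\ge\frac{\alpha_{\min}}{\alpha_{\min}+k-1}\,\mathrm{gap}_{\rm RW}(\alpha),$$ where $\alpha_{\min}=\min_x\alpha_x$.
   Context: $V$ is a finite set with symmetric non-negative weights $c_{xy}=c_{yx}\ge0$ forming a connected graph. $\Xi_{k-1}:=\{\xi\in\mathbb N_0^V:\sum_x\xi_x=k-1\}$ and $\alpha+\xi=(\alpha_x+\xi_x)_{x\in V}$. For a positive weight vector $\beta$, $\mathrm{gap}_{\rm RW}(\beta)$ is the smallest nonzero eigenvalue of $-A_\beta$, where $A_\beta\phi(x)=\sum_yc_{xy}\beta_y(\phi(y)-\phi(x))$ for $\phi:V\to\mathbb R$. *)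

theory Defs
  imports Main "HOL-Analysis.Analysis"
begin

definition A_gen :: "'a set \<Rightarrow> ('a \<Rightarrow> 'a \<Rightarrow> real) \<Rightarrow> ('a \<Rightarrow> real) \<Rightarrow> ('a \<Rightarrow> real) \<Rightarrow> 'a \<Rightarrow> real" where
  "A_gen V c \<beta> \<phi> x = (\<Sum>y\<in>V. c x y * \<beta> y * (\<phi> y - \<phi> x))"

definition is_eigenvalue_negA :: "'a set \<Rightarrow> ('a \<Rightarrow> 'a \<Rightarrow> real) \<Rightarrow> ('a \<Rightarrow> real) \<Rightarrow> real \<Rightarrow> bool" where
  "is_eigenvalue_negA V c \<beta> ev \<longleftrightarrow>
     (\<exists>\<phi>::'a \<Rightarrow> real. (\<exists>x\<in>V. \<phi> x \<noteq> 0) \<and> (\<forall>x\<in>V. - A_gen V c \<beta> \<phi> x = ev * \<phi> x))"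

definition gap_RW :: "'a set \<Rightarrow> ('a \<Rightarrow> 'a \<Rightarrow> real) \<Rightarrow> ('a \<Rightarrow> real) \<Rightarrow> real" where
  "gap_RW V c \<beta> = Inf {ev. ev \<noteq> 0 \<and> is_eigenvalue_negA V c \<beta> ev}"

definition Xi :: "'a set \<Rightarrow> nat \<Rightarrow> ('a \<Rightarrow> nat) set" where
  "Xi V m = {\<xi>. (\<forall>x. x \<notin> V \<longrightarrow> \<xi> x = 0) \<and> (\<Sum>x\<in>V. \<xi> x) = m}"

definition connected_weights :: "'a set \<Rightarrow> ('a \<Rightarrow> 'a \<Rightarrow> real) \<Rightarrow> bool" where
  "connected_weights V c \<longleftrightarrow>
     (\<forall>x\<in>V. \<forall>y\<in>V. (x, y) \<in> ({(u, v). u \<in> V \<and> v \<in> V \<and> c u v > 0})\<^sup>*)"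

end

theory Submission
  imports Defs
begin

text \<open>
  For positive weights \<open>w\<close> the operator \<open>-A\<^sub>w\<close> is symmetric on \<open>L\<^sup>2(w)\<close> with Dirichlet form
  \<open>E\<^sub>w(\<phi>) = 1/2 \<Sum>\<^sub>x\<^sub>y c x y w x w y (\<phi> x - \<phi> y)\<^sup>2\<close>, and \<open>gap_RW w\<close> is the best constant in the
  Poincare inequality \<open>gap \<cdot> \<Sum>\<^sub>x w x \<phi> x\<^sup>2 \<le> E\<^sub>w(\<phi>)\<close> for \<open>w\<close>-centred \<open>\<phi>\<close>. Only the
  variational half of the min-max principle is needed: the Rayleigh quotient on centred functions
  attains its minimum by compactness, a minimiser is an eigenfunction, and connectedness makes the
  minimum positive. If \<open>\<alpha> \<le> \<beta> \<le> C \<alpha>\<close>, then \<open>E\<^sub>\<alpha> \<le> E\<^sub>\<beta>\<close> while the \<open>\<beta>\<close>-variance is at most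
  \<open>C\<close> times the \<open>\<alpha>\<close>-variance, so \<open>gap_RW \<alpha> \<le> C \<cdot> gap_RW \<beta>\<close>. For \<open>\<beta> = \<alpha> + \<xi>\<close> with
  \<open>\<xi> \<in> \<Xi>\<^sub>k\<^sub>-\<^sub>1\<close> one may take \<open>C = (min \<alpha> + k - 1) / min \<alpha>\<close>, since \<open>\<xi> x \<le> k - 1\<close>.
\<close>

definition dirichlet_form ::
    "'a set \<Rightarrow> ('a \<Rightarrow> 'a \<Rightarrow> real) \<Rightarrow> ('a \<Rightarrow> real) \<Rightarrow> ('a \<Rightarrow> real) \<Rightarrow> ('a \<Rightarrow> real) \<Rightarrow> real" where
  "dirichlet_form V c w \<phi> \<psi> =
     (\<Sum>x\<in>V. \<Sum>y\<in>V. c x y * w x * w y * ((\<phi> x - \<phi> y) * (\<psi> x - \<psi> y))) / 2"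

lemma dirichlet_form_commute: "dirichlet_form V c w \<phi> \<psi> = dirichlet_form V c w \<psi> \<phi>"
  unfolding dirichlet_form_def by (simp add: mult_ac)

lemma dirichlet_form_cong:
  "(\<And>x. x \<in> V \<Longrightarrow> \<phi> x = \<phi>' x) \<Longrightarrow> (\<And>x. x \<in> V \<Longrightarrow> \<psi> x = \<psi>' x) \<Longrightarrow>
    dirichlet_form V c w \<phi> \<psi> = dirichlet_form V c w \<phi>' \<psi>'"
  unfolding dirichlet_form_def by (intro arg_cong[where f = "\<lambda>s. s / 2"] sum.cong refl) simp

lemma dirichlet_form_const_left [simp]: "dirichlet_form V c w (\<lambda>_. a) \<psi> = 0"
  unfolding dirichlet_form_def by simp

lemma dirichlet_form_diff_const [simp]:
  "dirichlet_form V c w (\<lambda>x. \<phi> x - m) (\<lambda>x. \<phi> x - m) = dirichlet_form V c w \<phi> \<phi>"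
  unfolding dirichlet_form_def by simp

lemma dirichlet_form_scale:
  "dirichlet_form V c w (\<lambda>x. a * \<phi> x) (\<lambda>x. a * \<phi> x) = a\<^sup>2 * dirichlet_form V c w \<phi> \<phi>"
  unfolding dirichlet_form_def by (simp add: sum_distrib_left algebra_simps power2_eq_square)

lemma dirichlet_form_add_scaled:
  "dirichlet_form V c w (\<lambda>x. \<phi> x + t * \<psi> x) (\<lambda>x. \<phi> x + t * \<psi> x) =
     dirichlet_form V c w \<phi> \<phi> + 2 * t * dirichlet_form V c w \<phi> \<psi> + t\<^sup>2 * dirichlet_form V c w \<psi> \<psi>"
proof -
  define q where "q \<phi> \<psi> x y = c x y * w x * w y * ((\<phi> x - \<phi> y) * (\<psi> x - \<psi> y))"
    for \<phi> \<psi> :: "'a \<Rightarrow> real" and x y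
  have "q (\<lambda>x. \<phi> x + t * \<psi> x) (\<lambda>x. \<phi> x + t * \<psi> x) x y = q \<phi> \<phi> x y + 2 * t * q \<phi> \<psi> x y + t\<^sup>2 * q \<psi> \<psi> x y"
    for x y by (simp add: q_def power2_eq_square algebra_simps)
  then have "(\<Sum>x\<in>V. \<Sum>y\<in>V. q (\<lambda>x. \<phi> x + t * \<psi> x) (\<lambda>x. \<phi> x + t * \<psi> x) x y) =
      (\<Sum>x\<in>V. \<Sum>y\<in>V. q \<phi> \<phi> x y) + 2 * t * (\<Sum>x\<in>V. \<Sum>y\<in>V. q \<phi> \<psi> x y)
        + t\<^sup>2 * (\<Sum>x\<in>V. \<Sum>y\<in>V. q \<psi> \<psi> x y)"
    by (simp add: sum.distrib sum_distrib_left)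
  then show ?thesis
    unfolding dirichlet_form_def q_def by (simp add: field_simps)
qed

lemma dirichlet_form_nonneg:
  assumes "\<And>x y. c x y \<ge> 0" and "\<And>x. x \<in> V \<Longrightarrow> w x \<ge> 0"
  shows "dirichlet_form V c w \<phi> \<phi> \<ge> 0"
  unfolding dirichlet_form_def using assms by (intro divide_nonneg_pos sum_nonneg) auto

lemma dirichlet_form_mono_weights:
  assumes "\<And>x y. c x y \<ge> 0" and "\<And>x. x \<in> V \<Longrightarrow> 0 \<le> \<alpha> x" and "\<And>x. x \<in> V \<Longrightarrow> \<alpha> x \<le> \<beta> x"
  shows "dirichlet_form V c \<alpha> \<phi> \<phi> \<le> dirichlet_form V c \<beta> \<phi> \<phi>"
  unfolding dirichlet_form_def
proof (intro divide_right_mono sum_mono)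
  fix x y assume "x \<in> V" "y \<in> V"
  then have "\<alpha> x * \<alpha> y \<le> \<beta> x * \<beta> y" using assms(2,3) by (intro mult_mono) (auto intro: order_trans)
  then have "\<alpha> x * \<alpha> y * (c x y * (\<phi> x - \<phi> y)\<^sup>2) \<le> \<beta> x * \<beta> y * (c x y * (\<phi> x - \<phi> y)\<^sup>2)"
    using assms(1) by (intro mult_right_mono) auto
  then show "c x y * \<alpha> x * \<alpha> y * ((\<phi> x - \<phi> y) * (\<phi> x - \<phi> y))
      \<le> c x y * \<beta> x * \<beta> y * ((\<phi> x - \<phi> y) * (\<phi> x - \<phi> y))"
    by (simp add: power2_eq_square mult_ac)
qed simp

lemma dirichlet_form_eq_0_imp_constant:
  assumes "finite V" and "\<And>x y. c x y \<ge> 0" and "\<And>x. x \<in> V \<Longrightarrow> w x > 0"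
    and "connected_weights V c" and "dirichlet_form V c w \<phi> \<phi> = 0" and "x \<in> V" "y \<in> V"
  shows "\<phi> x = \<phi> y"
proof -
  define q where "q = (\<lambda>(x, y). c x y * w x * w y * ((\<phi> x - \<phi> y) * (\<phi> x - \<phi> y)))"
  have q_nonneg: "\<forall>p\<in>V \<times> V. q p \<ge> 0"
    using assms(2,3) by (auto simp: q_def less_imp_le)
  have "sum q (V \<times> V) = 0"
    using assms(5) by (simp add: dirichlet_form_def sum.cartesian_product q_def)
  then have q0: "\<forall>p\<in>V \<times> V. q p = 0"
    using sum_nonneg_eq_0_iff[of "V \<times> V" q] assms(1) q_nonneg by auto
  have edge: "\<phi> u = \<phi> v" if "u \<in> V" "v \<in> V" "c u v > 0" for u v
  proof -
    have "q (u, v) = 0" using q0 that by blast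
    then show ?thesis using that assms(3)[of u] assms(3)[of v] by (simp add: q_def)
  qed
  have "(x, y) \<in> {(u, v). u \<in> V \<and> v \<in> V \<and> c u v > 0}\<^sup>*"
    using assms(4,6,7) by (auto simp: connected_weights_def)
  then show ?thesis
    by (induction rule: rtrancl_induct) (auto dest: edge)
qed

lemma A_gen_green_identity:
  assumes "finite V" and "\<And>x y. c x y = c y x"
  shows "(\<Sum>x\<in>V. w x * \<psi> x * A_gen V c w \<phi> x) = - dirichlet_form V c w \<psi> \<phi>"
proof -
  define S where "S \<psi> \<phi> = (\<Sum>x\<in>V. \<Sum>y\<in>V. c x y * w x * w y * (\<psi> x * (\<phi> y - \<phi> x)))"
    for \<psi> \<phi> :: "'a \<Rightarrow> real"
  have lhs: "(\<Sum>x\<in>V. w x * \<psi> x * A_gen V c w \<phi> x) = S \<psi> \<phi>"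
    by (simp add: S_def A_gen_def sum_distrib_left mult_ac)
  have swap: "S \<psi> \<phi> = (\<Sum>x\<in>V. \<Sum>y\<in>V. c x y * w x * w y * (\<psi> y * (\<phi> x - \<phi> y)))"
    unfolding S_def by (subst sum.swap) (simp add: assms(2) mult_ac)
  have "2 * dirichlet_form V c w \<psi> \<phi> =
      (\<Sum>x\<in>V. \<Sum>y\<in>V. - (c x y * w x * w y * (\<psi> x * (\<phi> y - \<phi> x)))
                      - c x y * w x * w y * (\<psi> y * (\<phi> x - \<phi> y)))"
    unfolding dirichlet_form_def by (simp, intro sum.cong refl) (simp add: algebra_simps)
  also have "\<dots> = - 2 * S \<psi> \<phi>"
    using swap by (simp add: S_def sum_subtractf sum_negf)
  finally show ?thesis using lhs by simp
qed

lemma sum_weighted_A_gen_eq_0: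
  assumes "finite V" and "\<And>x y. c x y = c y x"
  shows "(\<Sum>x\<in>V. w x * A_gen V c w \<phi> x) = 0"
  using A_gen_green_identity[OF assms, of w "\<lambda>_. 1"] by simp

lemma eigenfunction_rayleigh:
  assumes "finite V" and "\<And>x y. c x y = c y x"
    and "\<forall>x\<in>V. - A_gen V c w \<phi> x = e * \<phi> x"
  shows "e * (\<Sum>x\<in>V. w x * (\<phi> x)\<^sup>2) = dirichlet_form V c w \<phi> \<phi>"
proof -
  have "A_gen V c w \<phi> x = - (e * \<phi> x)" if "x \<in> V" for x
    using assms(3) that by (simp add: minus_equation_iff)
  then have "e * (\<Sum>x\<in>V. w x * (\<phi> x)\<^sup>2) = - (\<Sum>x\<in>V. w x * \<phi> x * A_gen V c w \<phi> x)"
    unfolding sum_distrib_left sum_negf[symmetric] by (intro sum.cong refl) (simp add: power2_eq_square)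
  then show ?thesis using A_gen_green_identity[OF assms(1,2)] by simp
qed

lemma eigenfunction_mean_zero:
  assumes "finite V" and "\<And>x y. c x y = c y x"
    and "\<forall>x\<in>V. - A_gen V c w \<phi> x = e * \<phi> x" and "e \<noteq> 0"
  shows "(\<Sum>x\<in>V. w x * \<phi> x) = 0"
proof -
  have "A_gen V c w \<phi> x = - (e * \<phi> x)" if "x \<in> V" for x
    using assms(3) that by (simp add: minus_equation_iff)
  then have "e * (\<Sum>x\<in>V. w x * \<phi> x) = - (\<Sum>x\<in>V. w x * A_gen V c w \<phi> x)"
    unfolding sum_distrib_left sum_negf[symmetric] by (intro sum.cong refl) simp
  then show ?thesis using sum_weighted_A_gen_eq_0[OF assms(1,2)] assms(4) by simp
qed

lemma eigenvalue_negA_nonneg: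
  assumes "finite V" and "\<And>x y. c x y = c y x" and "\<And>x y. c x y \<ge> 0"
    and "\<And>x. x \<in> V \<Longrightarrow> w x > 0" and "is_eigenvalue_negA V c w e"
  shows "e \<ge> 0"
proof -
  obtain \<phi> x0 where x0: "x0 \<in> V" "\<phi> x0 \<noteq> 0" and eig: "\<forall>x\<in>V. - A_gen V c w \<phi> x = e * \<phi> x"
    using assms(5) unfolding is_eigenvalue_negA_def by blast
  have "dirichlet_form V c w \<phi> \<phi> \<ge> 0"
    using assms(3,4) by (intro dirichlet_form_nonneg) (auto simp: less_imp_le)
  then have "e * (\<Sum>x\<in>V. w x * (\<phi> x)\<^sup>2) \<ge> 0"
    using eigenfunction_rayleigh[OF assms(1,2) eig] by simp
  moreover have "(\<Sum>x\<in>V. w x * (\<phi> x)\<^sup>2) > 0"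
    using assms(4) x0 by (intro sum_pos2[OF assms(1) x0(1)]) (auto simp: less_imp_le)
  ultimately show ?thesis by (simp add: zero_le_mult_iff)
qed

lemma continuous_map_attains_inf_on_bounded_closedin:
  fixes V :: "'a set" and f :: "('a \<Rightarrow> real) \<Rightarrow> real"
  defines "X \<equiv> product_topology (\<lambda>_. euclideanreal) V"
  assumes "continuous_map X euclideanreal f" and "closedin X S" and "S \<noteq> {}"
    and "S \<subseteq> (\<Pi>\<^sub>E x\<in>V. {-R..R})"
  obtains \<phi>0 where "\<phi>0 \<in> S" and "\<And>\<phi>. \<phi> \<in> S \<Longrightarrow> f \<phi>0 \<le> f \<phi>"
proof -
  have "compactin X (\<Pi>\<^sub>E x\<in>V. {-R..R})"
    unfolding X_def by (simp add: compactin_PiE)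
  then have "compactin X S" using closed_compactin assms(3,5) by blast
  then have "compact (f ` S)" using image_compactin[OF _ assms(2)] by auto
  then obtain s where "s \<in> f ` S" "\<forall>t\<in>f ` S. s \<le> t"
    using compact_attains_inf assms(4) by blast
  then show ?thesis using that by blast
qed

lemma exists_mean_zero_nonzero:
  fixes w :: "'a \<Rightarrow> real"
  assumes "finite V" and "card V \<ge> 2" and "\<And>x. x \<in> V \<Longrightarrow> w x > 0"
  obtains \<psi> where "(\<Sum>x\<in>V. w x * \<psi> x) = 0" and "(\<Sum>x\<in>V. w x * (\<psi> x)\<^sup>2) > 0"
proof -
  obtain a b where ab: "a \<in> V" "b \<in> V" "a \<noteq> b"
    using assms(2) by (meson card_2_iff' ex_card subset_iff)
  define \<psi> where "\<psi> x = (if x = a then w b else 0) - (if x = b then w a else 0)" for x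
  have "(\<Sum>x\<in>V. w x * \<psi> x) = 0"
    unfolding \<psi>_def right_diff_distrib sum_subtractf using ab
    by (simp add: if_distrib[of "\<lambda>y. w _ * y"] sum.delta[OF assms(1)] cong: if_cong)
  moreover have "w a * (\<psi> a)\<^sup>2 > 0"
    using ab assms(3)[OF ab(1)] assms(3)[OF ab(2)] by (simp add: \<psi>_def)
  then have "(\<Sum>x\<in>V. w x * (\<psi> x)\<^sup>2) > 0"
    using assms(3) by (intro sum_pos2[OF assms(1) ab(1)]) (auto simp: less_imp_le)
  ultimately show ?thesis using that by blast
qed

lemma abs_le_of_weighted_sum_sq_eq_1:
  assumes "finite V" and "\<And>x. x \<in> V \<Longrightarrow> w x > 0"
    and "(\<Sum>x\<in>V. w x * (\<phi> x)\<^sup>2) = 1" and "x \<in> V"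
  shows "\<bar>\<phi> x\<bar> \<le> (\<Sum>y\<in>V. sqrt (1 / w y))"
proof -
  have "w x * (\<phi> x)\<^sup>2 \<le> (\<Sum>x\<in>V. w x * (\<phi> x)\<^sup>2)"
    using assms(1,2,4) by (intro member_le_sum) (auto simp: less_imp_le)
  then have "(\<phi> x)\<^sup>2 \<le> 1 / w x"
    using assms(2)[OF assms(4)] assms(3) by (simp add: pos_le_divide_eq mult.commute)
  then have "\<bar>\<phi> x\<bar> \<le> sqrt (1 / w x)"
    by (metis real_sqrt_abs real_sqrt_le_mono)
  also have "\<dots> \<le> (\<Sum>y\<in>V. sqrt (1 / w y))"
    using assms(1,2,4) by (intro member_le_sum) (auto intro: less_imp_le)
  finally show ?thesis .
qed

lemma weighted_normalization:
  fixes w \<phi> :: "'a \<Rightarrow> real"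
  assumes "(\<Sum>x\<in>V. w x * (\<phi> x)\<^sup>2) > 0"
  defines "\<phi>' \<equiv> restrict (\<lambda>x. \<phi> x / sqrt (\<Sum>x\<in>V. w x * (\<phi> x)\<^sup>2)) V"
  shows "(\<Sum>x\<in>V. w x * \<phi>' x) = (\<Sum>x\<in>V. w x * \<phi> x) / sqrt (\<Sum>x\<in>V. w x * (\<phi> x)\<^sup>2)"
    and "(\<Sum>x\<in>V. w x * (\<phi>' x)\<^sup>2) = 1"
    and "dirichlet_form V c w \<phi>' \<phi>' = dirichlet_form V c w \<phi> \<phi> / (\<Sum>x\<in>V. w x * (\<phi> x)\<^sup>2)"
proof -
  define s where "s = 1 / sqrt (\<Sum>x\<in>V. w x * (\<phi> x)\<^sup>2)"
  have s2: "s\<^sup>2 = 1 / (\<Sum>x\<in>V. w x * (\<phi> x)\<^sup>2)"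
    using assms(1) by (simp add: s_def power_divide)
  have on_V: "x \<in> V \<Longrightarrow> \<phi>' x = s * \<phi> x" for x
    by (simp add: \<phi>'_def s_def)
  have "(\<Sum>x\<in>V. w x * \<phi>' x) = s * (\<Sum>x\<in>V. w x * \<phi> x)"
    unfolding sum_distrib_left by (intro sum.cong refl) (simp add: on_V)
  then show "(\<Sum>x\<in>V. w x * \<phi>' x) = (\<Sum>x\<in>V. w x * \<phi> x) / sqrt (\<Sum>x\<in>V. w x * (\<phi> x)\<^sup>2)"
    by (simp add: s_def)
  have "(\<Sum>x\<in>V. w x * (\<phi>' x)\<^sup>2) = s\<^sup>2 * (\<Sum>x\<in>V. w x * (\<phi> x)\<^sup>2)"
    unfolding sum_distrib_left by (intro sum.cong refl) (simp add: on_V power_mult_distrib)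
  then show "(\<Sum>x\<in>V. w x * (\<phi>' x)\<^sup>2) = 1"
    using s2 assms(1) by simp
  have "dirichlet_form V c w \<phi>' \<phi>' = s\<^sup>2 * dirichlet_form V c w \<phi> \<phi>"
    by (subst dirichlet_form_cong[where \<phi>' = "\<lambda>x. s * \<phi> x" and \<psi>' = "\<lambda>x. s * \<phi> x"])
      (simp_all add: on_V dirichlet_form_scale)
  then show "dirichlet_form V c w \<phi>' \<phi>' = dirichlet_form V c w \<phi> \<phi> / (\<Sum>x\<in>V. w x * (\<phi> x)\<^sup>2)"
    using s2 by simp
qed

lemma rayleigh_quotient_attains_min:
  assumes "finite V" and "card V \<ge> 2" and "\<And>x y. c x y \<ge> 0" and "\<And>x. x \<in> V \<Longrightarrow> w x > 0"
  obtains \<phi>0 where "(\<Sum>x\<in>V. w x * \<phi>0 x) = 0" and "(\<Sum>x\<in>V. w x * (\<phi>0 x)\<^sup>2) = 1"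
    and "\<And>\<phi>. (\<Sum>x\<in>V. w x * \<phi> x) = 0 \<Longrightarrow>
           dirichlet_form V c w \<phi>0 \<phi>0 * (\<Sum>x\<in>V. w x * (\<phi> x)\<^sup>2) \<le> dirichlet_form V c w \<phi> \<phi>"
proof -
  define X where "X = product_topology (\<lambda>_. euclideanreal) V"
  define L where "L \<phi> = (\<Sum>x\<in>V. w x * \<phi> x)" for \<phi> :: "'a \<Rightarrow> real"
  define N where "N \<phi> = (\<Sum>x\<in>V. w x * (\<phi> x)\<^sup>2)" for \<phi> :: "'a \<Rightarrow> real"
  define S where "S = {\<phi> \<in> topspace X. L \<phi> = 0 \<and> N \<phi> = 1}"
  have normalize: "restrict (\<lambda>x. \<phi> x / sqrt (N \<phi>)) V \<in> S \<and>
      dirichlet_form V c w (restrict (\<lambda>x. \<phi> x / sqrt (N \<phi>)) V) (restrict (\<lambda>x. \<phi> x / sqrt (N \<phi>)) V)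
        = dirichlet_form V c w \<phi> \<phi> / N \<phi>"
    if "L \<phi> = 0" "N \<phi> > 0" for \<phi>
    using weighted_normalization[of w \<phi> V] that by (simp add: S_def X_def L_def N_def)
  obtain \<psi> where "L \<psi> = 0" "N \<psi> > 0"
    using exists_mean_zero_nonzero[of V w] assms(1,2,4) unfolding L_def N_def by blast
  then have "S \<noteq> {}" using normalize by blast
  have "continuous_map X euclideanreal L" "continuous_map X euclideanreal N"
    unfolding X_def L_def N_def by (intro continuous_intros; simp add: assms(1))+
  then have "closedin X ({\<phi> \<in> topspace X. L \<phi> \<in> {0}} \<inter> {\<phi> \<in> topspace X. N \<phi> \<in> {1}})"
    by (intro closedin_Int closedin_continuous_map_preimage) auto
  moreover have "S = {\<phi> \<in> topspace X. L \<phi> \<in> {0}} \<inter> {\<phi> \<in> topspace X. N \<phi> \<in> {1}}"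
    unfolding S_def by auto
  ultimately have "closedin X S" by simp
  define R where "R = (\<Sum>y\<in>V. sqrt (1 / w y))"
  have "S \<subseteq> (\<Pi>\<^sub>E x\<in>V. {-R..R})"
  proof
    fix \<phi> assume "\<phi> \<in> S"
    then have bound: "\<bar>\<phi> x\<bar> \<le> R" if "x \<in> V" for x
      unfolding R_def using abs_le_of_weighted_sum_sq_eq_1[of V w \<phi> x] assms(1,4) that
      by (simp add: S_def N_def)
    have "\<phi> x \<in> {-R..R}" if "x \<in> V" for x
      using bound[OF that] abs_ge_self[of "\<phi> x"] abs_ge_minus_self[of "\<phi> x"] by simp
    moreover have "\<phi> \<in> extensional V"
      using \<open>\<phi> \<in> S\<close> by (simp add: S_def X_def PiE_def)
    ultimately show "\<phi> \<in> (\<Pi>\<^sub>E x\<in>V. {-R..R})"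
      by (simp add: PiE_iff)
  qed
  moreover have "continuous_map X euclideanreal (\<lambda>\<phi>. dirichlet_form V c w \<phi> \<phi>)"
    unfolding X_def dirichlet_form_def by (intro continuous_intros; simp add: assms(1))
  ultimately obtain \<phi>0 where \<phi>0: "\<phi>0 \<in> S"
    and min: "\<And>\<phi>. \<phi> \<in> S \<Longrightarrow> dirichlet_form V c w \<phi>0 \<phi>0 \<le> dirichlet_form V c w \<phi> \<phi>"
    using continuous_map_attains_inf_on_bounded_closedin \<open>closedin X S\<close> \<open>S \<noteq> {}\<close>
    unfolding X_def by blast
  have "dirichlet_form V c w \<phi>0 \<phi>0 * N \<phi> \<le> dirichlet_form V c w \<phi> \<phi>" if "L \<phi> = 0" for \<phi>
  proof (cases "N \<phi> = 0")
    case True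
    then show ?thesis using assms(3,4) by (simp add: dirichlet_form_nonneg less_imp_le)
  next
    case False
    moreover have "N \<phi> \<ge> 0"
      unfolding N_def using assms(4) by (intro sum_nonneg) (simp add: less_imp_le)
    ultimately have "N \<phi> > 0" by simp
    then show ?thesis using min normalize[OF that] by (fastforce simp: pos_le_divide_eq)
  qed
  then show ?thesis using that \<phi>0 unfolding S_def L_def N_def by blast
qed

lemma linear_coeff_eq_0_if_quadratic_nonneg:
  fixes a b :: real
  assumes "\<And>t. 0 \<le> t * b + t\<^sup>2 * a"
  shows "b = 0"
proof -
  define s where "s = \<bar>a\<bar> + 1"
  have s: "s > 0" "a \<le> s - 1" unfolding s_def by auto
  define t where "t = - b / s"
  have "0 \<le> t * b + t\<^sup>2 * a" by (rule assms)
  also have "\<dots> \<le> t * b + t\<^sup>2 * (s - 1)"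
    using s by (intro add_left_mono mult_left_mono) auto
  also have "\<dots> = - (b / s)\<^sup>2"
    using s by (simp add: t_def power2_eq_square field_simps)
  finally show ?thesis using s(1) by simp
qed

lemma rayleigh_minimizer_first_variation:
  assumes "(\<Sum>x\<in>V. w x * \<phi>0 x) = 0" and "(\<Sum>x\<in>V. w x * (\<phi>0 x)\<^sup>2) = 1"
    and min: "\<And>\<phi>. (\<Sum>x\<in>V. w x * \<phi> x) = 0 \<Longrightarrow>
           dirichlet_form V c w \<phi>0 \<phi>0 * (\<Sum>x\<in>V. w x * (\<phi> x)\<^sup>2) \<le> dirichlet_form V c w \<phi> \<phi>"
    and "(\<Sum>x\<in>V. w x * \<psi> x) = 0"
  shows "dirichlet_form V c w \<phi>0 \<psi> = dirichlet_form V c w \<phi>0 \<phi>0 * (\<Sum>x\<in>V. w x * \<phi>0 x * \<psi> x)"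
proof -
  define \<mu> where "\<mu> = dirichlet_form V c w \<phi>0 \<phi>0"
  define B where "B = (\<Sum>x\<in>V. w x * \<phi>0 x * \<psi> x)"
  define N\<psi> where "N\<psi> = (\<Sum>x\<in>V. w x * (\<psi> x)\<^sup>2)"
  have "0 \<le> t * (2 * dirichlet_form V c w \<phi>0 \<psi> - 2 * \<mu> * B) + t\<^sup>2 * (dirichlet_form V c w \<psi> \<psi> - \<mu> * N\<psi>)"
    for t
  proof -
    have "(\<Sum>x\<in>V. w x * (\<phi>0 x + t * \<psi> x)) = (\<Sum>x\<in>V. w x * \<phi>0 x) + t * (\<Sum>x\<in>V. w x * \<psi> x)"
      by (simp add: algebra_simps sum.distrib sum_distrib_left)
    then have "(\<Sum>x\<in>V. w x * (\<phi>0 x + t * \<psi> x)) = 0"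
      using assms(1,4) by simp
    then have "\<mu> * (\<Sum>x\<in>V. w x * (\<phi>0 x + t * \<psi> x)\<^sup>2)
        \<le> dirichlet_form V c w (\<lambda>x. \<phi>0 x + t * \<psi> x) (\<lambda>x. \<phi>0 x + t * \<psi> x)"
      unfolding \<mu>_def by (rule min)
    moreover have "(\<Sum>x\<in>V. w x * (\<phi>0 x + t * \<psi> x)\<^sup>2) = 1 + 2 * t * B + t\<^sup>2 * N\<psi>"
    proof -
      have "(\<Sum>x\<in>V. w x * (\<phi>0 x + t * \<psi> x)\<^sup>2)
          = (\<Sum>x\<in>V. w x * (\<phi>0 x)\<^sup>2 + 2 * t * (w x * \<phi>0 x * \<psi> x) + t\<^sup>2 * (w x * (\<psi> x)\<^sup>2))"
        by (intro sum.cong refl) (simp add: power2_eq_square algebra_simps)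
      then show ?thesis
        using assms(2) by (simp add: B_def N\<psi>_def sum.distrib sum_distrib_left)
    qed
    ultimately show ?thesis
      by (simp add: dirichlet_form_add_scaled \<mu>_def algebra_simps)
  qed
  then have "2 * dirichlet_form V c w \<phi>0 \<psi> - 2 * \<mu> * B = 0"
    by (rule linear_coeff_eq_0_if_quadratic_nonneg)
  then show ?thesis unfolding \<mu>_def B_def by simp
qed

lemma rayleigh_minimizer_eigenfunction:
  assumes "finite V" and "\<And>x y. c x y = c y x" and "\<And>x. x \<in> V \<Longrightarrow> w x > 0"
    and "(\<Sum>x\<in>V. w x * \<phi>0 x) = 0" and "(\<Sum>x\<in>V. w x * (\<phi>0 x)\<^sup>2) = 1"
    and "\<And>\<phi>. (\<Sum>x\<in>V. w x * \<phi> x) = 0 \<Longrightarrow>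
           dirichlet_form V c w \<phi>0 \<phi>0 * (\<Sum>x\<in>V. w x * (\<phi> x)\<^sup>2) \<le> dirichlet_form V c w \<phi> \<phi>"
  shows "\<forall>x\<in>V. - A_gen V c w \<phi>0 x = dirichlet_form V c w \<phi>0 \<phi>0 * \<phi>0 x"
proof -
  define \<mu> where "\<mu> = dirichlet_form V c w \<phi>0 \<phi>0"
  txt \<open>The defect \<open>g\<close> is itself \<open>w\<close>-centred, so the first variation in direction \<open>g\<close>
    forces its \<open>w\<close>-norm to vanish.\<close>
  define g where "g x = - A_gen V c w \<phi>0 x - \<mu> * \<phi>0 x" for x
  have "(\<Sum>x\<in>V. w x * g x) = - (\<Sum>x\<in>V. w x * A_gen V c w \<phi>0 x) - \<mu> * (\<Sum>x\<in>V. w x * \<phi>0 x)"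
    by (simp add: g_def algebra_simps sum_subtractf sum_negf sum_distrib_left)
  then have g_mean: "(\<Sum>x\<in>V. w x * g x) = 0"
    using sum_weighted_A_gen_eq_0[OF assms(1,2)] assms(4) by simp
  have "w x * (g x)\<^sup>2 = - (w x * g x * A_gen V c w \<phi>0 x) - \<mu> * (w x * \<phi>0 x * g x)" for x
    by (simp add: g_def power2_eq_square algebra_simps)
  then have "(\<Sum>x\<in>V. w x * (g x)\<^sup>2)
      = - (\<Sum>x\<in>V. w x * g x * A_gen V c w \<phi>0 x) - \<mu> * (\<Sum>x\<in>V. w x * \<phi>0 x * g x)"
    by (simp add: sum_subtractf sum_negf sum_distrib_left)
  also have "\<dots> = dirichlet_form V c w \<phi>0 g - \<mu> * (\<Sum>x\<in>V. w x * \<phi>0 x * g x)"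
    using A_gen_green_identity[OF assms(1,2)] dirichlet_form_commute by simp
  also have "\<dots> = 0"
    using rayleigh_minimizer_first_variation[OF assms(4-6) g_mean] by (simp add: \<mu>_def)
  finally have g_sq: "\<forall>x\<in>V. w x * (g x)\<^sup>2 = 0"
    using assms(1,3) by (subst sum_nonneg_eq_0_iff[symmetric]) (auto simp: less_imp_le)
  have "g x = 0" if "x \<in> V" for x
  proof -
    have "w x * (g x)\<^sup>2 = 0" using g_sq that by blast
    then show ?thesis using assms(3)[OF that] by simp
  qed
  then show ?thesis by (simp add: g_def \<mu>_def)
qed

lemma dirichlet_form_eq_0_mean_zero_imp_eq_0:
  assumes "finite V" and "\<And>x y. c x y \<ge> 0" and "\<And>x. x \<in> V \<Longrightarrow> w x > 0"
    and "connected_weights V c" and "dirichlet_form V c w \<phi> \<phi> = 0"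
    and "(\<Sum>x\<in>V. w x * \<phi> x) = 0" and "x \<in> V"
  shows "\<phi> x = 0"
proof -
  have "(\<Sum>y\<in>V. w y * \<phi> y) = (\<Sum>y\<in>V. \<phi> x * w y)"
  proof (rule sum.cong[OF refl])
    fix y assume "y \<in> V"
    have "\<phi> y = \<phi> x"
      by (rule dirichlet_form_eq_0_imp_constant[of V c w]) (use assms \<open>y \<in> V\<close> in auto)
    then show "w y * \<phi> y = \<phi> x * w y" by simp
  qed
  then have "\<phi> x * (\<Sum>y\<in>V. w y) = 0"
    using assms(6) by (simp add: sum_distrib_left)
  moreover have "(\<Sum>y\<in>V. w y) > 0"
    using assms(3,7) by (intro sum_pos2[OF assms(1,7)]) (auto simp: less_imp_le)
  ultimately show ?thesis by simp
qed

lemma spectral_gap_eigenvalue: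
  assumes "finite V" and "card V \<ge> 2" and "\<And>x y. c x y = c y x" and "\<And>x y. c x y \<ge> 0"
    and "connected_weights V c" and "\<And>x. x \<in> V \<Longrightarrow> w x > 0"
  obtains \<mu> where "\<mu> > 0" and "is_eigenvalue_negA V c w \<mu>"
    and "\<And>\<phi>. (\<Sum>x\<in>V. w x * \<phi> x) = 0 \<Longrightarrow>
           \<mu> * (\<Sum>x\<in>V. w x * (\<phi> x)\<^sup>2) \<le> dirichlet_form V c w \<phi> \<phi>"
proof -
  obtain \<phi>0 where mean: "(\<Sum>x\<in>V. w x * \<phi>0 x) = 0" and norm: "(\<Sum>x\<in>V. w x * (\<phi>0 x)\<^sup>2) = 1"
    and min: "\<And>\<phi>. (\<Sum>x\<in>V. w x * \<phi> x) = 0 \<Longrightarrow>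
           dirichlet_form V c w \<phi>0 \<phi>0 * (\<Sum>x\<in>V. w x * (\<phi> x)\<^sup>2) \<le> dirichlet_form V c w \<phi> \<phi>"
    by (rule rayleigh_quotient_attains_min[of V c w]) (use assms in auto)
  define \<mu> where "\<mu> = dirichlet_form V c w \<phi>0 \<phi>0"
  have eigenfunction: "\<forall>x\<in>V. - A_gen V c w \<phi>0 x = \<mu> * \<phi>0 x"
    unfolding \<mu>_def by (rule rayleigh_minimizer_eigenfunction[of V c w]) (use assms mean norm min in auto)
  obtain x0 where x0: "x0 \<in> V" "\<phi>0 x0 \<noteq> 0"
    using sum.not_neutral_contains_not_neutral[of "\<lambda>x. w x * (\<phi>0 x)\<^sup>2" V] norm by auto
  then have eigen: "is_eigenvalue_negA V c w \<mu>"
    unfolding is_eigenvalue_negA_def using eigenfunction by blast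
  have "\<mu> \<noteq> 0"
    using dirichlet_form_eq_0_mean_zero_imp_eq_0[of V c w \<phi>0 x0] assms mean x0 by (auto simp: \<mu>_def)
  moreover have "\<mu> \<ge> 0"
    unfolding \<mu>_def using assms(4,6) by (simp add: dirichlet_form_nonneg less_imp_le)
  ultimately have "\<mu> > 0" by simp
  from this eigen show ?thesis
    by (rule that) (unfold \<mu>_def, rule min)
qed

lemma gap_RW_le_eigenvalue:
  assumes "finite V" and "\<And>x y. c x y = c y x" and "\<And>x y. c x y \<ge> 0"
    and "\<And>x. x \<in> V \<Longrightarrow> w x > 0" and "is_eigenvalue_negA V c w e" and "e \<noteq> 0"
  shows "gap_RW V c w \<le> e"
  unfolding gap_RW_def
proof (rule cInf_lower)
  show "bdd_below {e. e \<noteq> 0 \<and> is_eigenvalue_negA V c w e}"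
    using eigenvalue_negA_nonneg[of V c w] assms(1-4) by (intro bdd_belowI[of _ 0]) blast
qed (use assms(5,6) in simp)

lemma gap_RW_greatest:
  assumes "finite V" and "card V \<ge> 2" and "\<And>x y. c x y = c y x" and "\<And>x y. c x y \<ge> 0"
    and "connected_weights V c" and "\<And>x. x \<in> V \<Longrightarrow> w x > 0"
    and "\<And>e. e \<noteq> 0 \<Longrightarrow> is_eigenvalue_negA V c w e \<Longrightarrow> b \<le> e"
  shows "b \<le> gap_RW V c w"
proof -
  obtain \<mu> where "\<mu> > 0" "is_eigenvalue_negA V c w \<mu>"
    by (rule spectral_gap_eigenvalue[of V c w]) (use assms in auto)
  txt \<open>Nonemptiness matters: \<open>Inf {}\<close> is unspecified on \<open>real\<close>.\<close>
  then have "\<mu> \<in> {e. e \<noteq> 0 \<and> is_eigenvalue_negA V c w e}" by simp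
  then have "{e. e \<noteq> 0 \<and> is_eigenvalue_negA V c w e} \<noteq> {}" by blast
  then show ?thesis
    unfolding gap_RW_def by (rule cInf_greatest) (use assms(7) in auto)
qed

lemma gap_RW_nonneg:
  assumes "finite V" and "card V \<ge> 2" and "\<And>x y. c x y = c y x" and "\<And>x y. c x y \<ge> 0"
    and "connected_weights V c" and "\<And>x. x \<in> V \<Longrightarrow> w x > 0"
  shows "gap_RW V c w \<ge> 0"
proof (rule gap_RW_greatest[of V c w])
  fix e assume "is_eigenvalue_negA V c w e"
  then show "0 \<le> e" using eigenvalue_negA_nonneg[of V c w e] assms by blast
qed (use assms in auto)

lemma gap_RW_poincare:
  assumes "finite V" and "card V \<ge> 2" and "\<And>x y. c x y = c y x" and "\<And>x y. c x y \<ge> 0"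
    and "connected_weights V c" and "\<And>x. x \<in> V \<Longrightarrow> w x > 0"
    and "(\<Sum>x\<in>V. w x * \<phi> x) = 0"
  shows "gap_RW V c w * (\<Sum>x\<in>V. w x * (\<phi> x)\<^sup>2) \<le> dirichlet_form V c w \<phi> \<phi>"
proof -
  obtain \<mu> where \<mu>: "\<mu> > 0" "is_eigenvalue_negA V c w \<mu>"
    and poincare: "\<And>\<phi>. (\<Sum>x\<in>V. w x * \<phi> x) = 0 \<Longrightarrow>
           \<mu> * (\<Sum>x\<in>V. w x * (\<phi> x)\<^sup>2) \<le> dirichlet_form V c w \<phi> \<phi>"
    by (rule spectral_gap_eigenvalue[of V c w]) (use assms in auto)
  have "gap_RW V c w \<le> \<mu>"
    by (rule gap_RW_le_eigenvalue[of V c w]) (use assms \<mu> in auto)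
  moreover have "(\<Sum>x\<in>V. w x * (\<phi> x)\<^sup>2) \<ge> 0"
    using assms(6) by (intro sum_nonneg) (simp add: less_imp_le)
  ultimately have "gap_RW V c w * (\<Sum>x\<in>V. w x * (\<phi> x)\<^sup>2) \<le> \<mu> * (\<Sum>x\<in>V. w x * (\<phi> x)\<^sup>2)"
    by (rule mult_right_mono)
  also have "\<dots> \<le> dirichlet_form V c w \<phi> \<phi>"
    using assms(7) by (rule poincare)
  finally show ?thesis .
qed

lemma sum_weighted_sq_le_shift:
  fixes w \<phi> :: "'a \<Rightarrow> real"
  assumes "(\<Sum>x\<in>V. w x * \<phi> x) = 0" and "\<And>x. x \<in> V \<Longrightarrow> w x \<ge> 0"
  shows "(\<Sum>x\<in>V. w x * (\<phi> x)\<^sup>2) \<le> (\<Sum>x\<in>V. w x * (\<phi> x - m)\<^sup>2)"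
proof -
  have "w x * (\<phi> x - m)\<^sup>2 = w x * (\<phi> x)\<^sup>2 - 2 * m * (w x * \<phi> x) + m\<^sup>2 * w x" for x
    by (simp add: power2_eq_square algebra_simps)
  then have "(\<Sum>x\<in>V. w x * (\<phi> x - m)\<^sup>2)
      = (\<Sum>x\<in>V. w x * (\<phi> x)\<^sup>2) - 2 * m * (\<Sum>x\<in>V. w x * \<phi> x) + m\<^sup>2 * (\<Sum>x\<in>V. w x)"
    by (simp add: sum.distrib sum_subtractf sum_distrib_left)
  moreover have "m\<^sup>2 * (\<Sum>x\<in>V. w x) \<ge> 0"
    using assms(2) by (simp add: sum_nonneg)
  ultimately show ?thesis using assms(1) by simp
qed

lemma sum_weighted_centred:
  fixes w \<phi> :: "'a \<Rightarrow> real"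
  assumes "(\<Sum>x\<in>V. w x) \<noteq> 0"
  shows "(\<Sum>x\<in>V. w x * (\<phi> x - (\<Sum>y\<in>V. w y * \<phi> y) / (\<Sum>y\<in>V. w y))) = 0"
proof -
  define m where "m = (\<Sum>y\<in>V. w y * \<phi> y) / (\<Sum>y\<in>V. w y)"
  have "(\<Sum>x\<in>V. w x * (\<phi> x - m)) = (\<Sum>x\<in>V. w x * \<phi> x) - m * (\<Sum>x\<in>V. w x)"
    by (simp add: right_diff_distrib sum_subtractf sum_distrib_left mult.commute)
  then show ?thesis using assms by (simp add: m_def)
qed

lemma sum_weighted_sq_le_mult:
  fixes \<alpha> \<beta> \<psi> :: "'a \<Rightarrow> real"
  assumes "\<And>x. x \<in> V \<Longrightarrow> \<beta> x \<le> C * \<alpha> x"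
  shows "(\<Sum>x\<in>V. \<beta> x * (\<psi> x)\<^sup>2) \<le> C * (\<Sum>x\<in>V. \<alpha> x * (\<psi> x)\<^sup>2)"
  unfolding sum_distrib_left
proof (rule sum_mono)
  fix x assume "x \<in> V"
  then have "\<beta> x * (\<psi> x)\<^sup>2 \<le> (C * \<alpha> x) * (\<psi> x)\<^sup>2"
    using assms by (intro mult_right_mono) auto
  then show "\<beta> x * (\<psi> x)\<^sup>2 \<le> C * (\<alpha> x * (\<psi> x)\<^sup>2)"
    by (simp add: mult.assoc)
qed

lemma eigenvalue_ge_gap_RW_of_comparable_weights:
  assumes "finite V" and "card V \<ge> 2" and "\<And>x y. c x y = c y x" and "\<And>x y. c x y \<ge> 0"
    and "connected_weights V c" and "\<And>x. x \<in> V \<Longrightarrow> \<alpha> x > 0"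
    and "\<And>x. x \<in> V \<Longrightarrow> \<alpha> x \<le> \<beta> x" and "\<And>x. x \<in> V \<Longrightarrow> \<beta> x \<le> C * \<alpha> x"
    and "is_eigenvalue_negA V c \<beta> e" and "e \<noteq> 0"
  shows "gap_RW V c \<alpha> \<le> C * e"
proof -
  have \<alpha>_nonneg: "\<alpha> x \<ge> 0" and \<beta>_pos: "\<beta> x > 0" if "x \<in> V" for x
    using assms(6)[OF that] assms(7)[OF that] by simp_all
  obtain \<phi> x0 where x0: "x0 \<in> V" "\<phi> x0 \<noteq> 0" and eig: "\<forall>x\<in>V. - A_gen V c \<beta> \<phi> x = e * \<phi> x"
    using assms(9) unfolding is_eigenvalue_negA_def by blast
  have "1 * \<alpha> x0 \<le> C * \<alpha> x0"
    using assms(7,8)[OF x0(1)] by simp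
  then have "C \<ge> 1"
    using assms(6)[OF x0(1)] by (rule mult_right_le_imp_le)
  txt \<open>Recentre \<open>\<phi>\<close> at its \<open>\<alpha>\<close>-mean: the energy is unchanged, and the \<open>\<beta>\<close>-norm can only
    grow because \<open>\<phi>\<close> is already \<open>\<beta>\<close>-centred.\<close>
  define \<psi> where "\<psi> = (\<lambda>x. \<phi> x - (\<Sum>y\<in>V. \<alpha> y * \<phi> y) / (\<Sum>y\<in>V. \<alpha> y))"
  define N\<alpha> where "N\<alpha> = (\<Sum>x\<in>V. \<alpha> x * (\<psi> x)\<^sup>2)"
  define N\<beta> where "N\<beta> = (\<Sum>x\<in>V. \<beta> x * (\<phi> x)\<^sup>2)"
  have "(\<Sum>x\<in>V. \<alpha> x) > 0"
    using assms(6) x0(1) by (intro sum_pos2[OF assms(1) x0(1)]) (auto simp: less_imp_le)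
  then have "(\<Sum>x\<in>V. \<alpha> x * \<psi> x) = 0"
    unfolding \<psi>_def by (intro sum_weighted_centred) simp
  then have "gap_RW V c \<alpha> * N\<alpha> \<le> dirichlet_form V c \<alpha> \<psi> \<psi>"
    unfolding N\<alpha>_def by (intro gap_RW_poincare[of V c \<alpha>]) (use assms in auto)
  also have "\<dots> = dirichlet_form V c \<alpha> \<phi> \<phi>"
    by (simp add: \<psi>_def)
  also have "\<dots> \<le> dirichlet_form V c \<beta> \<phi> \<phi>"
    using assms(4) \<alpha>_nonneg assms(7) by (rule dirichlet_form_mono_weights)
  also have "\<dots> = e * N\<beta>"
    unfolding N\<beta>_def using eigenfunction_rayleigh[OF assms(1,3) eig] by simp
  finally have upper: "gap_RW V c \<alpha> * N\<alpha> \<le> e * N\<beta>" .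
  have "N\<beta> \<le> (\<Sum>x\<in>V. \<beta> x * (\<psi> x)\<^sup>2)"
    unfolding N\<beta>_def \<psi>_def using \<beta>_pos
    by (intro sum_weighted_sq_le_shift eigenfunction_mean_zero[OF assms(1,3) eig assms(10)])
      (simp add: less_imp_le)
  also have "\<dots> \<le> C * N\<alpha>"
    unfolding N\<alpha>_def using assms(8) by (rule sum_weighted_sq_le_mult)
  finally have "gap_RW V c \<alpha> * N\<beta> \<le> gap_RW V c \<alpha> * (C * N\<alpha>)"
    using gap_RW_nonneg[of V c \<alpha>] assms(1-6) by (intro mult_left_mono) auto
  also have "\<dots> = C * (gap_RW V c \<alpha> * N\<alpha>)"
    by (simp add: mult.left_commute)
  also have "\<dots> \<le> C * (e * N\<beta>)"
    using upper \<open>C \<ge> 1\<close> by (intro mult_left_mono) auto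
  finally have "gap_RW V c \<alpha> * N\<beta> \<le> (C * e) * N\<beta>"
    by (simp add: mult.assoc)
  moreover have "N\<beta> > 0"
    unfolding N\<beta>_def using x0 \<beta>_pos
    by (intro sum_pos2[OF assms(1) x0(1)]) (auto simp: less_imp_le)
  ultimately show ?thesis by simp
qed

lemma gap_RW_weight_comparison:
  assumes "finite V" and "card V \<ge> 2" and "\<And>x y. c x y = c y x" and "\<And>x y. c x y \<ge> 0"
    and "connected_weights V c" and "\<And>x. x \<in> V \<Longrightarrow> \<alpha> x > 0"
    and "\<And>x. x \<in> V \<Longrightarrow> \<alpha> x \<le> \<beta> x" and "\<And>x. x \<in> V \<Longrightarrow> \<beta> x \<le> C * \<alpha> x"
  shows "gap_RW V c \<alpha> \<le> C * gap_RW V c \<beta>"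
proof -
  have \<beta>_pos: "\<beta> x > 0" if "x \<in> V" for x
    using assms(6)[OF that] assms(7)[OF that] by simp
  obtain x0 where x0: "x0 \<in> V" using assms(2) by fastforce
  have "1 * \<alpha> x0 \<le> C * \<alpha> x0"
    using assms(7,8)[OF x0] by simp
  then have "C \<ge> 1"
    using assms(6)[OF x0] by (rule mult_right_le_imp_le)
  then have "C > 0" by simp
  have "gap_RW V c \<alpha> / C \<le> gap_RW V c \<beta>"
  proof (rule gap_RW_greatest[of V c \<beta>])
    fix e assume "e \<noteq> 0" "is_eigenvalue_negA V c \<beta> e"
    then have "gap_RW V c \<alpha> \<le> C * e"
      by (intro eigenvalue_ge_gap_RW_of_comparable_weights[of V c \<alpha> \<beta> C]) (use assms in auto)
    then show "gap_RW V c \<alpha> / C \<le> e"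
      using \<open>C > 0\<close> by (simp add: divide_le_eq mult.commute)
  qed (use assms \<beta>_pos in auto)
  then show ?thesis
    using \<open>C > 0\<close> by (simp add: divide_le_eq mult.commute)
qed

lemma Xi_le:
  assumes "finite V" and "\<xi> \<in> Xi V m" and "x \<in> V"
  shows "\<xi> x \<le> m"
proof -
  have "\<xi> x \<le> (\<Sum>y\<in>V. \<xi> y)" using assms(1,3) by (intro member_le_sum) auto
  then show ?thesis using assms(2) by (simp add: Xi_def)
qed

lemma Xi_nonempty:
  assumes "finite V" and "V \<noteq> {}"
  shows "Xi V m \<noteq> {}"
proof -
  obtain a where "a \<in> V" using assms(2) by blast
  then have "(\<lambda>x. if x = a then m else 0) \<in> Xi V m"
    using assms(1) by (auto simp: Xi_def)
  then show ?thesis by blast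
qed

theorem lemma3p4:
  fixes V :: "'a set" and c :: "'a \<Rightarrow> 'a \<Rightarrow> real" and \<alpha> :: "'a \<Rightarrow> real" and k :: nat
  assumes "finite V" and "card V \<ge> 2"
    and "\<And>x y. c x y = c y x" and "\<And>x y. c x y \<ge> 0"
    and "connected_weights V c"
    and "\<And>x. x \<in> V \<Longrightarrow> \<alpha> x > 0"
    and "k \<ge> 1"
  shows "(INF \<xi>\<in>Xi V (k - 1). gap_RW V c (\<lambda>x. \<alpha> x + real (\<xi> x)))
           \<ge> Min (\<alpha> ` V) / (Min (\<alpha> ` V) + real k - 1) * gap_RW V c \<alpha>"
proof -
  define a where "a = Min (\<alpha> ` V)"
  have "V \<noteq> {}" using assms(2) by auto
  then have "a \<in> \<alpha> ` V" unfolding a_def using assms(1) by (intro Min_in) auto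
  then have "a > 0" using assms(6) by auto
  have a_le: "a \<le> \<alpha> x" if "x \<in> V" for x unfolding a_def using assms(1) that by simp
  have "a / (a + real k - 1) * gap_RW V c \<alpha> \<le> gap_RW V c (\<lambda>x. \<alpha> x + real (\<xi> x))"
    if "\<xi> \<in> Xi V (k - 1)" for \<xi>
  proof -
    have "\<alpha> x + real (\<xi> x) \<le> (a + real k - 1) / a * \<alpha> x" if "x \<in> V" for x
    proof -
      have "a * real (\<xi> x) \<le> \<alpha> x * (real k - 1)"
        using Xi_le[OF assms(1) \<open>\<xi> \<in> Xi V (k - 1)\<close> that] a_le[OF that] \<open>a > 0\<close> assms(7)
        by (intro mult_mono) (auto simp: of_nat_diff)
      then show ?thesis using \<open>a > 0\<close> by (simp add: field_simps)
    qed
    then have "gap_RW V c \<alpha> \<le> (a + real k - 1) / a * gap_RW V c (\<lambda>x. \<alpha> x + real (\<xi> x))"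
      by (intro gap_RW_weight_comparison) (use assms in auto)
    then show ?thesis using \<open>a > 0\<close> assms(7) by (simp add: field_simps)
  qed
  then show ?thesis
    unfolding a_def[symmetric] using Xi_nonempty[OF assms(1) \<open>V \<noteq> {}\<close>] by (intro cINF_greatest) auto
qed

end
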